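(* Let $n\in\mathbb{N}$, $n\ge 1$, and let $f:\mathbb{R}\to\mathbb{R}$ be an $n$-monomial function. Then the graph $G(f)=\{(x,f(x)):x\in\mathbb{R}\}\subseteq\mathbb{R}^2$ is either connected or totally disconnected. Furthermore, for every $n\in\mathbb{N}$, $n\ge1$, there exist a discontinuous $n$-monomial function $f:\mathbb{R}\to\mathbb{R}$ whose graph is connected and a discontinuous $n$-monomial function $g:\mathbb{R}\to\mathbb{R}$ whose graph is totally disconnected.
   Context: For $h\in\mathbb{R}$, $\Delta_h f(x)=f(x+h)-f(x)$ and $\Delta_h^{n}=\Delta_h\circ\Delta_h^{n-1}$. A function $f:\mathbb{R}\to\mathbb{R}$ is an $n$-monomial function if $\frac{1}{n!}\Delta_h^n f(x)=f(h)$ for all $x,h\in\mathbb{R}$ (equivalently, $f(x)=F(x,\dots,x)$ for some symmetric $n$-additive $F:\mathbb{R}^n\to\mathbb{R}$). A subset of $\mathbb{R}^2$ is totally disconnected if all its connected components are singletons. $\mathbb{R}^2$ carries the Euclidean topology and $G(f)$ the subspace topology. *)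

theory Defs
  imports "HOL-Analysis.Analysis"
begin

definition diff_op :: "real \<Rightarrow> (real \<Rightarrow> real) \<Rightarrow> real \<Rightarrow> real" where
  "diff_op h f x = f (x + h) - f x"

definition diff_pow :: "nat \<Rightarrow> real \<Rightarrow> (real \<Rightarrow> real) \<Rightarrow> real \<Rightarrow> real" where
  "diff_pow n h = (diff_op h) ^^ n"

definition monomial_fun :: "nat \<Rightarrow> (real \<Rightarrow> real) \<Rightarrow> bool" where
  "monomial_fun n f \<longleftrightarrow> (\<forall>x h. diff_pow n h f x / fact n = f h)"

definition graph_of :: "(real \<Rightarrow> real) \<Rightarrow> (real \<times> real) set" where
  "graph_of f = {(x, f x) | x. True}"

definition totally_disconnected :: "'a::topological_space set \<Rightarrow> bool" where
  "totally_disconnected S \<longleftrightarrow> (\<forall>x\<in>S. connected_component_set S x = {x})"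

end

theory Submission
  imports Defs "HOL-Computational_Algebra.Polynomial"
begin

text \<open>
  An \<open>n\<close>-monomial function satisfies \<open>f (r * x) = r ^ n * f x\<close> for rational \<open>r\<close>, so its
  graph is invariant under the continuous maps \<open>(x, y) \<mapsto> (r * x, r ^ n * y)\<close>, which therefore
  map connected components of the graph into connected components. Suppose some component
  contains two points; its projection to the \<open>x\<close>-axis is then a nondegenerate interval, which
  after the reflection \<open>r = -1\<close> may be taken to meet the positive half-line in an interval
  \<open>[a, b]\<close>. For rational \<open>1 < q < b / a\<close> the dilations by \<open>q\<close> and \<open>1 / q\<close> move a point of
  the component back into it, hence map the whole component into itself, and its projection
  contains \<open>(0, \<infinity>)\<close>. The points over \<open>(0, \<infinity>)\<close> accumulate at the origin, and reflecting once
  more puts the entire graph into the component of the origin. So the graph is connected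
  unless all components are points.

  For the examples, \<open>x \<mapsto> c x ^ n\<close> with \<open>c\<close> a rational-valued \<open>\<rat>\<close>-linear map fixing \<open>1\<close> is
  monomial with a disconnected, hence totally disconnected, graph. A monomial function with
  connected graph is obtained by F. B. Jones' method: by transfinite recursion of length
  continuum, choose \<open>\<rat>\<close>-independent abscissae and prescribe values there so that the graph
  meets every closed set whose projection contains an interval; such a graph is connected.
\<close>

subsection \<open>Iterated differences\<close>

lemma diff_pow_0 [simp]: "diff_pow 0 h f = f"
  by (simp add: diff_pow_def)

lemma diff_pow_Suc: "diff_pow (Suc n) h f = diff_op h (diff_pow n h f)"
  by (simp add: diff_pow_def)

lemma diff_pow_Suc': "diff_pow (Suc n) h f = diff_pow n h (diff_op h f)"
  by (simp only: diff_pow_def funpow_Suc_right comp_def)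

lemma diff_pow_sum:
  "diff_pow m h (\<lambda>t. \<Sum>j\<in>J. c j * g j t) = (\<lambda>t. \<Sum>j\<in>J. c j * diff_pow m h (g j) t)"
  by (induction m) (simp_all add: diff_pow_Suc diff_op_def sum_subtractf[symmetric] right_diff_distrib)

lemma diff_pow_power:
  "j \<le> m \<Longrightarrow> diff_pow m 1 (\<lambda>t. t ^ j) t0 = (if j = m then fact m else 0)"
proof (induction m arbitrary: j t0)
  case 0
  then show ?case by simp
next
  case (Suc m)
  have binomial: "diff_op 1 (\<lambda>t::real. t ^ j) = (\<lambda>t. \<Sum>i<j. of_nat (j choose i) * t ^ i)"
  proof
    fix t :: real
    have "(t + 1) ^ j = (\<Sum>i<j. of_nat (j choose i) * t ^ i) + t ^ j"
      by (simp add: binomial_ring lessThan_Suc_atMost[symmetric])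
    then show "diff_op 1 (\<lambda>t. t ^ j) t = (\<Sum>i<j. of_nat (j choose i) * t ^ i)"
      by (simp add: diff_op_def)
  qed
  have "diff_pow (Suc m) 1 (\<lambda>t. t ^ j) t0
      = (\<Sum>i<j. of_nat (j choose i) * (if i = m then fact m else 0))"
    using Suc.prems by (simp add: diff_pow_Suc' binomial diff_pow_sum Suc.IH)
  also have "\<dots> = (if j = Suc m then fact (Suc m) else 0)"
  proof (cases "j = Suc m")
    case True
    then show ?thesis by (simp add: sum.delta binomial_Suc_n algebra_simps)
  next
    case False
    then show ?thesis using Suc.prems by (intro trans[OF sum.neutral]) auto
  qed
  finally show ?case .
qed

lemma diff_pow_poly:
  assumes "degree P \<le> m"
  shows "diff_pow m 1 (poly P) t0 = fact m * coeff P m"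
proof -
  have "poly P = (\<lambda>t. \<Sum>j\<le>m. coeff P j * t ^ j)"
    unfolding poly_altdef
    by (intro ext sum.mono_neutral_left) (use assms in \<open>auto simp: coeff_eq_0\<close>)
  then have "diff_pow m 1 (poly P) t0 = (\<Sum>j\<le>m. coeff P j * (if j = m then fact m else 0))"
    by (simp add: diff_pow_sum diff_pow_power)
  also have "\<dots> = fact m * coeff P m"
    by (simp add: if_distrib sum.delta cong: if_cong)
  finally show ?thesis .
qed

lemma diff_pow_rescale: "diff_pow n h f (x + k * h) = diff_pow n 1 (\<lambda>t. f (x + t * h)) k"
proof (induction n arbitrary: k)
  case 0
  then show ?case by simp
next
  case (Suc n)
  have shift: "x + k * h + h = x + (k + 1) * h"
    by (simp add: algebra_simps)
  show ?case
    by (simp add: diff_pow_Suc diff_op_def shift Suc.IH[symmetric])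
qed

lemma diff_pow_1_cong:
  "(\<And>j::nat. \<phi> (k + real j) = \<psi> (k + real j)) \<Longrightarrow> diff_pow n 1 \<phi> k = diff_pow n 1 \<psi> k"
proof (induction n arbitrary: k)
  case 0
  then show ?case using "0.prems"[of 0] by simp
next
  case (Suc n)
  have "diff_pow n 1 \<phi> (k + 1) = diff_pow n 1 \<psi> (k + 1)"
    by (rule Suc.IH) (use Suc.prems[of "Suc _"] in \<open>simp add: add.assoc\<close>)
  then show ?case
    using Suc.IH[OF Suc.prems] by (simp add: diff_pow_Suc diff_op_def)
qed

lemma degree_coeff_prod_linear:
  "degree (\<Prod>i<n. [:a i, b i:]) \<le> n \<and> coeff (\<Prod>i<n. [:a i, b i:]) n = (\<Prod>i<n. b i)"
proof (induction n)
  case 0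
  then show ?case by simp
next
  case (Suc n)
  let ?Q = "\<Prod>i<n. [:a i, b i:]"
  have "degree ([:a n, b n:] * ?Q) \<le> degree [:a n, b n:] + degree ?Q"
    by (rule degree_mult_le)
  moreover have "degree [:a n, b n:] \<le> 1"
    by (simp add: degree_pCons_eq_if)
  moreover have "coeff ?Q (Suc n) = 0"
    using Suc.IH by (simp add: coeff_eq_0)
  ultimately show ?case
    using Suc.IH by (simp add: mult.commute mult_pCons_left)
qed

lemma additive_of_nat_mult:
  assumes "\<And>x y. u (x + y) = u x + u y"
  shows "u (x + real j * h) = u x + real j * u h"
proof (induction j)
  case 0
  then show ?case using assms[of x 0] by simp
next
  case (Suc j)
  have "u (x + real (Suc j) * h) = u ((x + real j * h) + h)"
    by (simp add: algebra_simps)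
  then show ?case
    using assms Suc by (simp add: algebra_simps)
qed

text \<open>Along a line \<open>x + t * h\<close> the product is a polynomial in \<open>t\<close> of degree \<open>n\<close>.\<close>

lemma monomial_fun_prod_additive:
  assumes add: "\<And>i x y. i < n \<Longrightarrow> u i (x + y) = u i x + u i y"
  shows "monomial_fun n (\<lambda>x. \<Prod>i<n. u i x)"
  unfolding monomial_fun_def
proof (intro allI)
  fix x h
  let ?f = "\<lambda>x. \<Prod>i<n. u i x"
  let ?P = "\<Prod>i<n. [:u i x, u i h:]"
  have "diff_pow n h ?f x = diff_pow n 1 (\<lambda>t. ?f (x + t * h)) 0"
    using diff_pow_rescale[of n h ?f x 0] by simp
  also have "\<dots> = diff_pow n 1 (poly ?P) 0"
  proof (rule diff_pow_1_cong)
    fix j :: nat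
    have "u i (x + real j * h) = u i x + real j * u i h" if "i < n" for i
      using additive_of_nat_mult add[OF that] by blast
    then show "?f (x + (0 + real j) * h) = poly ?P (0 + real j)"
      by (simp add: poly_prod mult.commute)
  qed
  also have "\<dots> = fact n * (\<Prod>i<n. u i h)"
    using degree_coeff_prod_linear[of "\<lambda>i. u i x" "\<lambda>i. u i h" n] by (simp add: diff_pow_poly)
  finally show "diff_pow n h ?f x / fact n = ?f h"
    by simp
qed

subsection \<open>Rational homogeneity of monomial functions\<close>

definition shift_sum :: "nat \<Rightarrow> real \<Rightarrow> (real \<Rightarrow> real) \<Rightarrow> real \<Rightarrow> real" where
  "shift_sum m h g x = (\<Sum>i<m. g (x + real i * h))"

lemma diff_op_of_nat_mult: "diff_op (real m * h) g = shift_sum m h (diff_op h g)"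
proof
  fix x
  have "shift_sum m h (diff_op h g) x = (\<Sum>i<m. g (x + real (Suc i) * h) - g (x + real i * h))"
    unfolding shift_sum_def diff_op_def by (intro sum.cong refl) (simp add: algebra_simps)
  also have "\<dots> = g (x + real m * h) - g x"
    using sum_lessThan_telescope[where f = "\<lambda>i. g (x + real i * h)"] by simp
  finally show "diff_op (real m * h) g x = shift_sum m h (diff_op h g) x"
    by (simp add: diff_op_def algebra_simps)
qed

lemma diff_op_shift_sum_funpow: "diff_op h ((shift_sum m h ^^ k) g) = (shift_sum m h ^^ k) (diff_op h g)"
proof -
  have "diff_op h (shift_sum m h g) = shift_sum m h (diff_op h g)" for g
    unfolding shift_sum_def diff_op_def by (rule ext) (simp add: sum_subtractf algebra_simps)
  then show ?thesis
    by (induction k) simp_all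
qed

lemma diff_pow_of_nat_mult: "diff_pow k (real m * h) g = (shift_sum m h ^^ k) (diff_pow k h g)"
  by (induction k) (simp_all add: diff_pow_Suc diff_op_of_nat_mult diff_op_shift_sum_funpow)

lemma shift_sum_funpow_const: "(shift_sum m h ^^ k) (\<lambda>_. c) = (\<lambda>_. real m ^ k * c)"
  by (induction k) (simp_all add: shift_sum_def mult.assoc)

lemma diff_pow_uminus: "diff_pow k (- h) g x = (-1) ^ k * diff_pow k h g (x - real k * h)"
proof (induction k arbitrary: x)
  case 0
  then show ?case by simp
next
  case (Suc k)
  have e1: "x + - h - real k * h = x - real (Suc k) * h"
    by (simp add: algebra_simps)
  have e2: "x - real (Suc k) * h + h = x - real k * h"
    by (simp add: algebra_simps)
  have "diff_pow (Suc k) (- h) g x = diff_pow k (- h) g (x + - h) - diff_pow k (- h) g x"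
    by (simp add: diff_pow_Suc diff_op_def)
  also have "\<dots> = (-1) ^ Suc k * (diff_pow k h g (x - real (Suc k) * h + h)
                                    - diff_pow k h g (x - real (Suc k) * h))"
    by (simp only: Suc.IH e1 e2) (simp add: algebra_simps)
  also have "\<dots> = (-1) ^ Suc k * diff_pow (Suc k) h g (x - real (Suc k) * h)"
    by (simp add: diff_pow_Suc diff_op_def)
  finally show ?case .
qed

lemma monomial_fun_diff_pow: "monomial_fun n f \<Longrightarrow> diff_pow n h f = (\<lambda>_. fact n * f h)"
  unfolding monomial_fun_def by (rule ext) (simp add: field_simps)

lemma monomial_fun_of_nat_mult:
  assumes "monomial_fun n f"
  shows "f (real m * h) = real m ^ n * f h"
proof -
  have "fact n * f (real m * h) = diff_pow n (real m * h) f 0"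
    using monomial_fun_diff_pow[OF assms] by metis
  also have "\<dots> = fact n * (real m ^ n * f h)"
    by (simp add: diff_pow_of_nat_mult monomial_fun_diff_pow[OF assms] shift_sum_funpow_const)
  finally show ?thesis
    by simp
qed

lemma monomial_fun_uminus:
  assumes "monomial_fun n f"
  shows "f (- h) = (-1) ^ n * f h"
proof -
  have "fact n * f (- h) = diff_pow n (- h) f 0"
    using monomial_fun_diff_pow[OF assms] by metis
  also have "\<dots> = fact n * ((-1) ^ n * f h)"
    by (simp only: diff_pow_uminus) (simp add: monomial_fun_diff_pow[OF assms])
  finally show ?thesis
    by simp
qed

lemma monomial_fun_of_int_mult:
  assumes "monomial_fun n f"
  shows "f (real_of_int a * h) = real_of_int a ^ n * f h"
proof (cases "a \<ge> 0")
  case True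
  then show ?thesis
    using monomial_fun_of_nat_mult[OF assms, of "nat a"] by simp
next
  case False
  define m where "m = nat (- a)"
  have a: "real_of_int a = - real m"
    using False by (simp add: m_def)
  have "f (real_of_int a * h) = (-1) ^ n * (real m ^ n * f h)"
    unfolding a mult_minus_left monomial_fun_uminus[OF assms] monomial_fun_of_nat_mult[OF assms] ..
  also have "\<dots> = real_of_int a ^ n * f h"
    unfolding a by (simp add: power_minus[of "real m"])
  finally show ?thesis .
qed

lemma monomial_fun_Rats_mult:
  assumes "monomial_fun n f" and "r \<in> \<rat>"
  shows "f (r * h) = r ^ n * f h"
proof -
  obtain a b where b: "b > 0" and r: "r = of_int a / of_int b"
    using assms(2) by (metis Rats_cases')
  have "f h = real_of_int b ^ n * f (h / of_int b)"
    using monomial_fun_of_int_mult[OF assms(1), of b "h / of_int b"] b by simp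
  moreover have "f (r * h) = real_of_int a ^ n * f (h / of_int b)"
    using monomial_fun_of_int_mult[OF assms(1), of a "h / of_int b"] by (simp add: r)
  ultimately show ?thesis
    using b by (simp add: r power_divide)
qed

lemma monomial_fun_0:
  assumes "monomial_fun n f" "n \<ge> 1"
  shows "f 0 = 0"
  using monomial_fun_of_nat_mult[OF assms(1), of 0 0] assms(2) by (simp add: zero_power)

subsection \<open>Connected components of the graph\<close>

lemma mem_graph_of [simp]: "(a, b) \<in> graph_of f \<longleftrightarrow> b = f a"
  by (auto simp: graph_of_def)

definition dilation :: "nat \<Rightarrow> real \<Rightarrow> real \<times> real \<Rightarrow> real \<times> real" where
  "dilation n r z = (r * fst z, r ^ n * snd z)"

lemma continuous_on_dilation: "continuous_on A (dilation n r)"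
  unfolding dilation_def by (intro continuous_intros)

lemma dilation_graph_point:
  "monomial_fun n f \<Longrightarrow> r \<in> \<rat> \<Longrightarrow> dilation n r (x, f x) = (r * x, f (r * x))"
  by (simp add: dilation_def monomial_fun_Rats_mult)

lemma dilation_graph_of_subset:
  "monomial_fun n f \<Longrightarrow> r \<in> \<rat> \<Longrightarrow> dilation n r ` graph_of f \<subseteq> graph_of f"
  by (auto simp: graph_of_def dilation_graph_point)

lemma graph_component_point:
  assumes "x \<in> fst ` connected_component_set (graph_of f) p"
  shows "(x, f x) \<in> connected_component_set (graph_of f) p"
proof -
  obtain z where z: "z \<in> connected_component_set (graph_of f) p" "x = fst z"
    using assms by blast
  then have "z = (x, f x)"
    using connected_component_subset[of "graph_of f" p] by (cases z) auto
  then show ?thesis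
    using z by simp
qed

lemma graph_component_projection_scaling:
  assumes mon: "monomial_fun n f" and r: "r \<in> \<rat>"
    and C: "C = connected_component_set (graph_of f) p"
    and y: "y \<in> fst ` C" "r * y \<in> fst ` C" and x: "x \<in> fst ` C"
  shows "r * x \<in> fst ` C"
proof -
  have "(r * y, f (r * y)) \<in> dilation n r ` C"
    using graph_component_point[of y f p] y(1) dilation_graph_point[OF mon r] C by (metis image_eqI)
  moreover have "connected (dilation n r ` C)"
    unfolding C by (intro connected_continuous_image continuous_on_dilation connected_connected_component)
  moreover have "dilation n r ` C \<subseteq> graph_of f"
    using dilation_graph_of_subset[OF mon r] connected_component_subset C by blast
  ultimately have "dilation n r ` C \<subseteq> connected_component_set (graph_of f) (r * y, f (r * y))"
    by (rule connected_component_maximal)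
  also have "\<dots> = C"
    using graph_component_point[of "r * y" f p] y(2) C connected_component_eq by blast
  finally have "(r * x, f (r * x)) \<in> C"
    using graph_component_point[of x f p] x dilation_graph_point[OF mon r] C by (metis image_subset_iff)
  then show ?thesis
    by force
qed

lemma is_interval_scaling_closed_contains_positive:
  fixes P :: "real set"
  assumes P: "is_interval P" and a: "a \<in> P" "0 < a" and q: "1 < q"
    and up: "\<And>x. x \<in> P \<Longrightarrow> q * x \<in> P" and down: "\<And>x. x \<in> P \<Longrightarrow> x / q \<in> P"
  shows "{0<..} \<subseteq> P"
proof
  fix t :: real
  assume "t \<in> {0<..}"
  then have t: "t > 0"
    by simp
  have powers: "a * q ^ k \<in> P \<and> a / q ^ k \<in> P" for k
  proof (induction k)
    case 0
    then show ?case using a by simp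
  next
    case (Suc k)
    then show ?case
      using up[of "a * q ^ k"] down[of "a / q ^ k"] by (simp add: ac_simps divide_divide_eq_left)
  qed
  obtain k where k: "max (t / a) (a / t) < q ^ k"
    using real_arch_pow[OF q] by blast
  have "a / q ^ k \<le> t" "t \<le> a * q ^ k"
    using k a t q by (simp_all add: field_simps)
  then show "t \<in> P"
    using P powers[of k] unfolding is_interval_1 by blast
qed

lemma monomial_graph_component_projection_positive:
  assumes mon: "monomial_fun n f" and C: "C = connected_component_set (graph_of f) p"
    and ab: "0 < a" "a < b" "{a..b} \<subseteq> fst ` C"
  shows "{0<..} \<subseteq> fst ` C"
proof -
  obtain q where q: "q \<in> \<rat>" "1 < q" "q < b / a"
    using Rats_dense_in_real[of 1 "b / a"] ab by auto
  have "a \<le> q * a" "q * a \<le> b" "a \<le> b / q" "b / q \<le> b"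
    using q ab by (simp_all add: field_simps)
  then have "q * a \<in> fst ` C" "inverse q * b \<in> fst ` C" "a \<in> fst ` C" "b \<in> fst ` C"
    using ab by (auto simp: field_simps)
  then show ?thesis
  proof (intro is_interval_scaling_closed_contains_positive[of _ a q])
    show "is_interval (fst ` C)"
      unfolding is_interval_connected_1 C
      by (intro connected_continuous_image continuous_intros connected_connected_component)
    show "q * x \<in> fst ` C" if "x \<in> fst ` C" for x
      using graph_component_projection_scaling[OF mon q(1) C] \<open>a \<in> _\<close> \<open>q * a \<in> _\<close> that by blast
    show "x / q \<in> fst ` C" if "x \<in> fst ` C" for x
      using graph_component_projection_scaling[OF mon _ C, of "inverse q" b x] q(1)
        \<open>b \<in> _\<close> \<open>inverse q * b \<in> _\<close> that by (simp add: divide_inverse mult.commute)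
  qed (use ab q in auto)
qed

lemma monomial_graph_origin_in_closure:
  assumes mon: "monomial_fun n f" and n: "n \<ge> 1" and pos: "\<And>x. 0 < x \<Longrightarrow> (x, f x) \<in> S"
  shows "(0, 0) \<in> closure S"
  unfolding closure_sequential
proof (intro exI conjI allI)
  let ?t = "\<lambda>k::nat. 1 / (real k + 1)"
  show "(?t k, ?t k ^ n * f 1) \<in> S" for k
    using pos[of "?t k"] monomial_fun_Rats_mult[OF mon, of "?t k" 1] by simp
  have "?t \<longlonglongrightarrow> 0"
    using LIMSEQ_inverse_real_of_nat by (simp add: inverse_eq_divide add.commute)
  moreover from this have "(\<lambda>k. ?t k ^ n * f 1) \<longlonglongrightarrow> 0 ^ n * f 1"
    by (intro tendsto_intros)
  ultimately show "(\<lambda>k. (?t k, ?t k ^ n * f 1)) \<longlonglongrightarrow> (0, 0)"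
    using n by (simp add: tendsto_Pair zero_power)
qed

lemma monomial_graph_connected_if_component_positive:
  assumes mon: "monomial_fun n f" and n: "n \<ge> 1"
    and C: "C = connected_component_set (graph_of f) p" and pos: "{0<..} \<subseteq> fst ` C"
  shows "connected (graph_of f)"
proof -
  define K0 where "K0 = connected_component_set (graph_of f) (0, 0)"
  have f0: "f 0 = 0"
    by (rule monomial_fun_0[OF mon n])
  have "(0, 0) \<in> closure C"
    using graph_component_point[of _ f p] pos unfolding C by (intro monomial_graph_origin_in_closure[OF mon n]) blast
  then have "insert (0, 0) C \<subseteq> closure C"
    using closure_subset[of C] by blast
  then have "connected (insert (0, 0) C)"
    using connected_intermediate_closure[of C "insert (0, 0) C"] C by auto
  then have "insert (0, 0) C \<subseteq> K0"
    unfolding K0_def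
    by (rule connected_component_maximal[rotated]) (use f0 C connected_component_subset in auto)
  then have pos0: "{0<..} \<subseteq> fst ` K0"
    using pos by auto
  have "(0, 0) \<in> K0"
    using f0 unfolding K0_def by simp
  then have zero: "0 \<in> fst ` K0"
    by (metis fst_conv image_eqI)
  have "t \<in> fst ` K0" for t
  proof (cases "0 < t \<or> t = 0")
    case False
    then have "- t \<in> fst ` K0"
      using pos0 by auto
    then show ?thesis
      using graph_component_projection_scaling[OF mon _ K0_def, of "-1" 0 "- t"] zero by simp
  qed (use pos0 zero in auto)
  then have "graph_of f \<subseteq> K0"
    using graph_component_point[of _ f "(0, 0)"] unfolding K0_def by (auto simp: graph_of_def)
  then show ?thesis
    using connected_component_subset[of "graph_of f" "(0, 0)"]
    by (metis K0_def connected_connected_component subset_antisym)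
qed

lemma monomial_graph_connected_if_positive_interval:
  assumes mon: "monomial_fun n f" and n: "n \<ge> 1"
    and S: "connected S" "S \<subseteq> graph_of f" and ab: "0 < a" "a < b" "{a..b} \<subseteq> fst ` S"
  shows "connected (graph_of f)"
proof -
  obtain s where s: "s \<in> S"
    using ab by fastforce
  have "S \<subseteq> connected_component_set (graph_of f) s"
    by (rule connected_component_maximal[OF s S])
  then have "{a..b} \<subseteq> fst ` connected_component_set (graph_of f) s"
    using ab by blast
  then show ?thesis
    using monomial_graph_component_projection_positive[OF mon refl ab(1,2)]
      monomial_graph_connected_if_component_positive[OF mon n refl] by blast
qed

lemma monomial_graph_connected_if_interval:
  assumes mon: "monomial_fun n f" and n: "n \<ge> 1"
    and S: "connected S" "S \<subseteq> graph_of f" and x12: "x1 < x2" "{x1..x2} \<subseteq> fst ` S"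
  shows "connected (graph_of f)"
proof (cases "x2 > 0")
  case True
  then show ?thesis
    using x12 by (intro monomial_graph_connected_if_positive_interval[OF mon n S, of "max x1 (x2 / 2)" x2]) auto
next
  case False
  let ?S = "dilation n (-1) ` S"
  have "connected ?S"
    by (intro connected_continuous_image continuous_on_dilation S)
  moreover have "?S \<subseteq> graph_of f"
    using dilation_graph_of_subset[OF mon, of "-1"] S by auto
  moreover have "{max (- x2) (- x1 / 2) .. - x1} \<subseteq> fst ` ?S"
  proof
    fix t
    assume "t \<in> {max (- x2) (- x1 / 2) .. - x1}"
    then have "- t \<in> fst ` S"
      using x12 by auto
    then show "t \<in> fst ` ?S"
      by (force simp: dilation_def)
  qed
  ultimately show ?thesis
    using False x12 by (intro monomial_graph_connected_if_positive_interval[OF mon n]) auto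
qed

lemma monomial_graph_connected_or_totally_disconnected:
  assumes mon: "monomial_fun n f" and n: "n \<ge> 1"
  shows "connected (graph_of f) \<or> totally_disconnected (graph_of f)"
proof (rule disjCI)
  assume "\<not> totally_disconnected (graph_of f)"
  then obtain p where "p \<in> graph_of f" and nontrivial: "connected_component_set (graph_of f) p \<noteq> {p}"
    unfolding totally_disconnected_def by blast
  define C where "C = connected_component_set (graph_of f) p"
  then obtain z where z: "z \<in> C" "z \<noteq> p" and p: "p \<in> C"
    using \<open>p \<in> graph_of f\<close> nontrivial by fastforce
  moreover have "C \<subseteq> graph_of f"
    unfolding C_def by (rule connected_component_subset)
  ultimately have "fst z \<noteq> fst p"
    by (metis mem_graph_of prod.collapse subsetD)
  then obtain x1 x2 where x12: "x1 < x2" "x1 \<in> fst ` C" "x2 \<in> fst ` C"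
    using z p by (metis image_eqI linorder_neqE)
  have "is_interval (fst ` C)"
    unfolding is_interval_connected_1 C_def
    by (intro connected_continuous_image continuous_intros connected_connected_component)
  then have "{x1..x2} \<subseteq> fst ` C"
    using x12 unfolding is_interval_1 by auto
  then show "connected (graph_of f)"
    using x12(1) \<open>C \<subseteq> graph_of f\<close>
    by (intro monomial_graph_connected_if_interval[OF mon n, of C x1 x2]) (simp_all add: C_def)
qed

subsection \<open>A monomial function with totally disconnected graph\<close>

lemma connected_graph_of_continuous: "continuous_on UNIV g \<Longrightarrow> connected (graph_of g)"
proof -
  assume "continuous_on UNIV g"
  then have "connected ((\<lambda>x. (x, g x)) ` UNIV)"
    by (intro connected_continuous_image continuous_intros) auto
  moreover have "(\<lambda>x. (x, g x)) ` UNIV = graph_of g"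
    by (auto simp: graph_of_def)
  ultimately show ?thesis
    by simp
qed

lemma not_connected_graph_of_Rats_valued:
  fixes g :: "real \<Rightarrow> real"
  assumes rat: "\<And>x. g x \<in> \<rat>" and ab: "g a < g b"
  shows "\<not> connected (graph_of g)"
proof
  assume "connected (graph_of g)"
  then have "is_interval (snd ` graph_of g)"
    unfolding is_interval_connected_1 by (intro connected_continuous_image continuous_intros)
  moreover have "g a \<in> snd ` graph_of g" "g b \<in> snd ` graph_of g"
    by (force simp: graph_of_def)+
  ultimately have "{g a..g b} \<subseteq> snd ` graph_of g"
    unfolding is_interval_1 by (meson atLeastAtMost_iff subsetI)
  also have "\<dots> \<subseteq> \<rat>"
    using rat by (auto simp: graph_of_def)
  finally have "countable {g a..g b}"
    using countable_rat countable_subset by blast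
  then show False
    using uncountable_closed_interval ab by blast
qed

definition scaleQ :: "rat \<Rightarrow> real \<Rightarrow> real" where
  "scaleQ q x = of_rat q * x"

interpretation Qv: vector_space scaleQ
  by unfold_locales (auto simp: scaleQ_def algebra_simps of_rat_add of_rat_mult)

interpretation QQ: vector_space_pair scaleQ scaleQ
  by unfold_locales

lemma Qv_independent_one: "Qv.independent {1::real}"
  by (rule Qv.independent_insertI) (use Qv.independent_empty in \<open>auto simp: Qv.span_empty\<close>)

text \<open>The coordinate of \<open>x\<close> at \<open>1\<close> in a Hamel basis containing \<open>1\<close>.\<close>

definition rat_coord :: "real \<Rightarrow> real" where
  "rat_coord x = of_rat (Qv.representation (Qv.extend_basis {1}) x 1)"

lemma rat_coord_add: "rat_coord (x + y) = rat_coord x + rat_coord y"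
  unfolding rat_coord_def
  using Qv.representation_add[OF Qv.independent_extend_basis[OF Qv_independent_one], of y x]
  by (simp add: of_rat_add)

lemma rat_coord_1: "rat_coord 1 = 1"
proof -
  have "1 \<in> Qv.extend_basis {1::real}"
    using Qv.extend_basis_superset[OF Qv_independent_one] by auto
  then show ?thesis
    unfolding rat_coord_def
    using Qv.representation_basis[OF Qv.independent_extend_basis[OF Qv_independent_one]] by simp
qed

lemma monomial_totally_disconnected_example:
  assumes n: "n \<ge> 1"
  shows "\<exists>g::real \<Rightarrow> real. monomial_fun n g \<and> \<not> continuous_on UNIV g
                \<and> totally_disconnected (graph_of g)"
proof (intro exI conjI)
  let ?g = "\<lambda>x. rat_coord x ^ n"
  have "monomial_fun n (\<lambda>x. \<Prod>i<n. rat_coord x)"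
    by (rule monomial_fun_prod_additive) (rule rat_coord_add)
  then show mon: "monomial_fun n ?g"
    by simp
  have "?g 0 < ?g 1"
    using monomial_fun_0[OF mon n] by (simp add: rat_coord_1 zero_power)
  then have nc: "\<not> connected (graph_of ?g)"
    by (intro not_connected_graph_of_Rats_valued) (simp add: rat_coord_def)
  then show "\<not> continuous_on UNIV ?g"
    using connected_graph_of_continuous by blast
  show "totally_disconnected (graph_of ?g)"
    using monomial_graph_connected_or_totally_disconnected[OF mon n] nc by simp
qed

subsection \<open>A connectedness criterion for graphs\<close>

lemma graph_of_meets_closed_vertical_line_near:
  fixes g :: "real \<Rightarrow> real"
  assumes meets: "\<And>K a b. closed K \<Longrightarrow> a < b \<Longrightarrow> {a<..<b} \<subseteq> fst ` K \<Longrightarrow> graph_of g \<inter> K \<noteq> {}"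
    and W: "open W" "graph_of g \<subseteq> W" and d: "d > 0"
  shows "\<exists>x'. dist x' x < d \<and> range (Pair x') \<subseteq> W"
proof -
  have "\<not> {x - d<..<x + d} \<subseteq> fst ` (- W)"
    using meets[of "- W" "x - d" "x + d"] W d by auto
  then obtain x' where x': "x' \<in> {x - d<..<x + d}" "x' \<notin> fst ` (- W)"
    by blast
  then have "range (Pair x') \<subseteq> W"
    by (force simp: image_iff)
  moreover have "dist x' x < d"
    using x'(1) by (auto simp: dist_real_def abs_less_iff)
  ultimately show ?thesis
    by blast
qed

lemma graph_of_side_closed:
  fixes g :: "real \<Rightarrow> real"
  assumes meets: "\<And>K a b. closed K \<Longrightarrow> a < b \<Longrightarrow> {a<..<b} \<subseteq> fst ` K \<Longrightarrow> graph_of g \<inter> K \<noteq> {}"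
    and U: "open U" and V: "open V" and UV: "U \<inter> V = {}" and cover: "graph_of g \<subseteq> U \<union> V"
  shows "closed {x. (x, g x) \<in> U}"
proof -
  have line: "\<exists>x'. dist x' x < d \<and> range (Pair x') \<subseteq> U \<union> V" if "d > 0" for x d
    by (rule graph_of_meets_closed_vertical_line_near[OF _ open_Un[OF U V] cover that]) (fact meets)
  have "x \<in> {x. (x, g x) \<in> U}" if x: "x \<in> closure {x. (x, g x) \<in> U}" for x
  proof (rule ccontr)
    assume "x \<notin> {x. (x, g x) \<in> U}"
    then have "(x, g x) \<in> V"
      using cover by (auto simp: subset_iff)
    then obtain e where e: "e > 0" "ball (x, g x) e \<subseteq> V"
      using V open_contains_ball by blast
    then obtain x1 where x1: "(x1, g x1) \<in> U" "dist x1 x < e / 2"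
      using x unfolding closure_approachable by (metis half_gt_zero mem_Collect_eq)
    then obtain e1 where e1: "e1 > 0" "ball (x1, g x1) e1 \<subseteq> U"
      using U open_contains_ball by blast
    obtain x2 where x2: "dist x2 x1 < min e1 (e / 2)" "range (Pair x2) \<subseteq> U \<union> V"
      using line[of "min e1 (e / 2)" x1] e e1 by auto
    have "(x2, g x1) \<in> U"
      using x2(1) e1(2) by (auto simp: dist_Pair_Pair dist_commute subset_iff)
    moreover have "dist x2 x < e"
      using x1(2) x2(1) dist_triangle[of x2 x x1] by linarith
    then have "(x2, g x) \<in> V"
      using e(2) by (auto simp: dist_Pair_Pair dist_commute subset_iff)
    moreover have "connected (range (Pair x2 :: real \<Rightarrow> real \<times> real))"
      by (intro connected_continuous_image continuous_intros) simp
    ultimately show False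
      using connectedD[OF _ U V _ x2(2)] UV by blast
  qed
  then show ?thesis
    using closure_subset_eq by blast
qed

lemma connected_graph_of_if_meets_closed:
  fixes g :: "real \<Rightarrow> real"
  assumes meets: "\<And>K a b. closed K \<Longrightarrow> a < b \<Longrightarrow> {a<..<b} \<subseteq> fst ` K \<Longrightarrow> graph_of g \<inter> K \<noteq> {}"
  shows "connected (graph_of g)"
proof (rule ccontr)
  let ?G = "graph_of g"
  assume "\<not> connected ?G"
  then obtain A B where AB: "open A" "open B" "?G \<subseteq> A \<union> B" "A \<inter> B \<inter> ?G = {}"
      "A \<inter> ?G \<noteq> {}" "B \<inter> ?G \<noteq> {}"
    unfolding connected_def by blast
  have "(?G \<inter> A) \<inter> closure (?G \<inter> B) = {}" "(?G \<inter> B) \<inter> closure (?G \<inter> A) = {}"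
    using open_Int_closure_eq_empty[OF AB(1), of "?G \<inter> B"] open_Int_closure_eq_empty[OF AB(2), of "?G \<inter> A"]
      AB(4) by blast+
  then obtain U V where UV: "U \<inter> V = {}" "open U" "open V" "?G \<inter> A \<subseteq> U" "?G \<inter> B \<subseteq> V"
    using separation_closures by metis
  then have cover: "?G \<subseteq> U \<union> V" "?G \<subseteq> V \<union> U"
    using AB(3) by blast+
  have "closed {x. (x, g x) \<in> U}" "closed {x. (x, g x) \<in> V}"
    using graph_of_side_closed[OF meets] UV cover by (simp_all add: Int_commute)
  moreover have "{x. (x, g x) \<in> U} \<noteq> {}" "{x. (x, g x) \<in> V} \<noteq> {}"
    using AB(5,6) UV(4,5) by (auto simp: graph_of_def)
  moreover have "UNIV \<subseteq> {x. (x, g x) \<in> U} \<union> {x. (x, g x) \<in> V}"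
    using cover by (auto simp: graph_of_def)
  moreover have "{x. (x, g x) \<in> U} \<inter> {x. (x, g x) \<in> V} = {}"
    using UV(1) by auto
  ultimately have "\<not> connected (UNIV :: real set)"
    unfolding connected_closed by blast
  then show False
    by simp
qed

subsection \<open>A monomial function with connected graph\<close>

unbundle cardinal_syntax

text \<open>\<open>rat_combinations T k\<close> consists of the rational combinations of at most \<open>k\<close> elements of \<open>T\<close>.\<close>

definition rat_combinations :: "real set \<Rightarrow> nat \<Rightarrow> real set" where
  "rat_combinations T =
     rec_nat {0} (\<lambda>k S. (\<lambda>(z, q, t). z + scaleQ q t) ` (S \<times> ((UNIV :: rat set) \<times> T)))"

lemma rat_combinations_0: "rat_combinations T 0 = {0}"
  and rat_combinations_Suc: "rat_combinations T (Suc k)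
    = (\<lambda>(z, q, t). z + scaleQ q t) ` (rat_combinations T k \<times> ((UNIV :: rat set) \<times> T))"
  by (simp_all add: rat_combinations_def)

lemma Qv_span_subset_rat_combinations: "Qv.span T \<subseteq> (\<Union>k. rat_combinations T k)"
proof
  fix v
  assume "v \<in> Qv.span T"
  then obtain t r where t: "finite t" "t \<subseteq> T" and v: "v = (\<Sum>a\<in>t. scaleQ (r a) a)"
    unfolding Qv.span_explicit by blast
  have "t \<subseteq> T \<Longrightarrow> (\<Sum>a\<in>t. scaleQ (r a) a) \<in> rat_combinations T (card t)"
    using t(1)
  proof (induction t rule: finite_induct)
    case empty
    then show ?case by (simp add: rat_combinations_0)
  next
    case (insert x F)
    then have "((\<Sum>a\<in>F. scaleQ (r a) a), r x, x) \<in> rat_combinations T (card F) \<times> ((UNIV :: rat set) \<times> T)"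
      by auto
    moreover have "(\<Sum>a\<in>insert x F. scaleQ (r a) a)
        = (\<lambda>(z, q, t). z + scaleQ q t) ((\<Sum>a\<in>F. scaleQ (r a) a), r x, x)"
      using insert by simp
    ultimately have "(\<Sum>a\<in>insert x F. scaleQ (r a) a) \<in> rat_combinations T (Suc (card F))"
      unfolding rat_combinations_Suc by (rule rev_image_eqI)
    then show ?case
      using insert by simp
  qed
  then show "v \<in> (\<Union>k. rat_combinations T k)"
    using t v by blast
qed

lemma card_of_rat_combinations:
  assumes B: "infinite B" and QT: "|(UNIV :: rat set) \<times> T| \<le>o |B|"
  shows "|rat_combinations T k| \<le>o |B|"
proof (induction k)
  case 0
  show ?case
    unfolding rat_combinations_0
    using finite_ordLess_infinite[OF card_of_Well_order card_of_Well_order, of "{0::real}" B] B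
    by (simp add: Field_card_of ordLess_imp_ordLeq)
next
  case (Suc k)
  have "|rat_combinations T k \<times> ((UNIV :: rat set) \<times> T)| \<le>o |B|"
    using card_of_Times_ordLeq_infinite_Field[of "|B|" "rat_combinations T k" "(UNIV :: rat set) \<times> T"]
      B Suc QT
    by (simp add: Field_card_of card_of_Card_order card_of_card_order_on)
  then show ?case
    unfolding rat_combinations_Suc using card_of_image ordLeq_transitive by blast
qed

lemma card_of_Qv_span_less_continuum:
  fixes T :: "real set"
  assumes T: "|T| <o |UNIV :: nat set set|"
  shows "|Qv.span T| <o |UNIV :: nat set set|"
proof -
  define B where "B = T <+> (UNIV :: nat set)"
  have natB: "|UNIV :: nat set| \<le>o |B|"
    unfolding B_def by (rule card_of_Plus2)
  then have infB: "infinite B"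
    using infinite_iff_card_of_nat by blast
  have "infinite (UNIV :: nat set set)"
    by (metis Pow_UNIV finite_Pow_iff infinite_UNIV_nat)
  then have B: "|B| <o |UNIV :: nat set set|"
    unfolding B_def using T card_of_Pow[of "UNIV :: nat set"]
    by (intro card_of_Plus_ordLess_infinite) simp_all
  have "|UNIV :: rat set| \<le>o |UNIV :: nat set|"
    unfolding card_of_ordLeq[symmetric] by (intro exI[of _ to_nat]) simp
  then have "|UNIV :: rat set| \<le>o |B|"
    using natB ordLeq_transitive by blast
  then have "|(UNIV :: rat set) \<times> T| \<le>o |B|"
    using card_of_Times_ordLeq_infinite_Field[of "|B|" "UNIV :: rat set" T] infB
      card_of_Plus1[of T "UNIV :: nat set"]
    by (simp add: B_def Field_card_of card_of_Card_order card_of_card_order_on)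
  then have "|\<Union>k. rat_combinations T k| \<le>o |B|"
    using card_of_rat_combinations[OF infB] by (intro card_of_UNION_ordLeq_infinite[OF infB natB]) blast
  then have "|Qv.span T| \<le>o |B|"
    using card_of_mono1[OF Qv_span_subset_rat_combinations] ordLeq_transitive by blast
  then show ?thesis
    using B ordLeq_ordLess_trans by blast
qed

lemma exists_not_in_Qv_span:
  fixes a b :: real
  assumes "a < b" "|T| <o |UNIV :: nat set set|"
  shows "\<exists>x. a < x \<and> x < b \<and> x \<notin> Qv.span T"
proof (rule ccontr)
  assume "\<not> ?thesis"
  then have "|{a<..<b}| \<le>o |Qv.span T|"
    by (intro card_of_mono1) auto
  moreover have "(UNIV :: nat set set) \<approx> {a<..<b}"
    using nat_sets_eqpoll_reals open_interval_eqpoll_reals[of a b] assms(1)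
    by (meson eqpoll_sym eqpoll_trans)
  then have "|UNIV :: nat set set| \<le>o |{a<..<b}|"
    unfolding eqpoll_iff_card_of_ordIso using ordIso_iff_ordLeq by blast
  ultimately show False
    using card_of_Qv_span_less_continuum[OF assms(2)] ordLeq_transitive not_ordLess_ordLeq by blast
qed

lemma closed_sets_indexed_by_nat_sets:
  "\<exists>F :: nat set \<Rightarrow> (real \<times> real) set. \<forall>K. closed K \<longrightarrow> (\<exists>S. F S = K)"
proof -
  obtain \<B> :: "(real \<times> real) set set"
    where B: "countable \<B>" "\<And>S. open S \<Longrightarrow> \<exists>U. U \<subseteq> \<B> \<and> S = \<Union>U"
    using univ_second_countable by metis
  define F where "F S = - \<Union> (from_nat_into \<B> ` S)" for S
  have "\<exists>S. F S = K" if "closed K" for K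
  proof -
    have "open (- K)" using that by (simp add: open_Compl)
    then obtain U where U: "U \<subseteq> \<B>" "- K = \<Union>U" using B(2) by blast
    define S where "S = {k. from_nat_into \<B> k \<in> U}"
    have "from_nat_into \<B> ` S = U"
    proof
      show "from_nat_into \<B> ` S \<subseteq> U" unfolding S_def by auto
      show "U \<subseteq> from_nat_into \<B> ` S"
      proof
        fix u assume "u \<in> U"
        then obtain k where "from_nat_into \<B> k = u" using from_nat_into_surj[OF B(1)] U(1) by blast
        then show "u \<in> from_nat_into \<B> ` S" unfolding S_def using \<open>u \<in> U\<close> by blast
      qed
    qed
    then have "F S = K" unfolding F_def using U(2) by (metis double_compl)
    then show ?thesis by blast
  qed
  then show ?thesis by blast
qed

definition spans_interval :: "(real \<times> real) set \<Rightarrow> bool" where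
  "spans_interval K \<longleftrightarrow> (\<exists>a b. a < b \<and> {a<..<b} \<subseteq> fst ` K)"

definition closed_set_of :: "nat set \<Rightarrow> (real \<times> real) set" where
  "closed_set_of = (SOME F. \<forall>K. closed K \<longrightarrow> (\<exists>S. F S = K))"

lemma closed_set_of_surj: "closed K \<Longrightarrow> \<exists>S. closed_set_of S = K"
  using someI_ex[OF closed_sets_indexed_by_nat_sets] unfolding closed_set_of_def by blast

text \<open>
  A well-order of the continuum in which every initial segment has smaller cardinality;
  the closed sets are handled along it.
\<close>

abbreviation continuum_wo :: "(nat set \<times> nat set) set" where
  "continuum_wo \<equiv> |UNIV :: nat set set|"

lemma wo_rel_continuum_wo: "wo_rel continuum_wo"
  by (simp add: wo_rel_def card_of_Well_order)

lemma continuum_wo_total: "(S, T) \<in> continuum_wo \<or> (T, S) \<in> continuum_wo"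
  using wo_rel.TOTALS[OF wo_rel_continuum_wo] by (simp add: Field_card_of)

lemma continuum_wo_trans: "(S, T) \<in> continuum_wo \<Longrightarrow> (T, U) \<in> continuum_wo \<Longrightarrow> (S, U) \<in> continuum_wo"
  using wo_rel.TRANS[OF wo_rel_continuum_wo] unfolding trans_def by blast

lemma continuum_wo_refl: "(S, S) \<in> continuum_wo"
  using wo_rel.REFL[OF wo_rel_continuum_wo] by (simp add: Field_card_of refl_on_def)

lemma card_of_underS_continuum_wo: "|underS continuum_wo S| <o continuum_wo"
  by (rule card_of_underS[OF card_of_Card_order]) (simp add: Field_card_of)

lemma finite_has_continuum_wo_greatest:
  "finite A \<Longrightarrow> A \<noteq> {} \<Longrightarrow> \<exists>M\<in>A. \<forall>T\<in>A. (T, M) \<in> continuum_wo"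
proof (induction A rule: finite_ne_induct)
  case (singleton x)
  then show ?case using continuum_wo_refl by auto
next
  case (insert x F)
  then obtain M where M: "M \<in> F" "\<forall>T\<in>F. (T, M) \<in> continuum_wo"
    by blast
  then show ?case
    using continuum_wo_total[of x M] continuum_wo_trans continuum_wo_refl by blast
qed

definition jones_step :: "(nat set \<Rightarrow> real \<times> real) \<Rightarrow> nat set \<Rightarrow> real \<times> real" where
  "jones_step pt S = (SOME p. fst p \<notin> Qv.span (fst ` pt ` underS continuum_wo S)
      \<and> (spans_interval (closed_set_of S) \<longrightarrow> p \<in> closed_set_of S))"

definition jones_point :: "nat set \<Rightarrow> real \<times> real" where
  "jones_point = wfrec (continuum_wo - Id) jones_step"

lemma jones_point_unfold: "jones_point S = jones_step jones_point S"
proof -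
  have "jones_point S = jones_step (cut jones_point (continuum_wo - Id) S) S"
    unfolding jones_point_def by (rule wfrec[OF wo_rel.WF[OF wo_rel_continuum_wo]])
  moreover have "cut jones_point (continuum_wo - Id) S ` underS continuum_wo S
      = jones_point ` underS continuum_wo S"
    by (intro image_cong refl) (simp add: underS_def cut_apply)
  ultimately show ?thesis
    unfolding jones_step_def by simp
qed

lemma jones_point_spec:
  "fst (jones_point S) \<notin> Qv.span (fst ` jones_point ` underS continuum_wo S)
   \<and> (spans_interval (closed_set_of S) \<longrightarrow> jones_point S \<in> closed_set_of S)"
proof -
  let ?T = "fst ` jones_point ` underS continuum_wo S"
  have "|?T| \<le>o |jones_point ` underS continuum_wo S|"
    by (rule card_of_image)
  also have "|jones_point ` underS continuum_wo S| \<le>o |underS continuum_wo S|"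
    by (rule card_of_image)
  finally have T: "|?T| <o continuum_wo"
    using card_of_underS_continuum_wo ordLeq_ordLess_trans by blast
  have ex: "\<exists>p. fst p \<notin> Qv.span ?T \<and> (spans_interval (closed_set_of S) \<longrightarrow> p \<in> closed_set_of S)"
  proof (cases "spans_interval (closed_set_of S)")
    case True
    then obtain a b where ab: "a < b" "{a<..<b} \<subseteq> fst ` closed_set_of S"
      unfolding spans_interval_def by blast
    obtain x where x: "a < x" "x < b" "x \<notin> Qv.span ?T"
      using exists_not_in_Qv_span[OF ab(1) T] by blast
    then have "x \<in> fst ` closed_set_of S"
      using ab(2) by auto
    then obtain p where "p \<in> closed_set_of S" "fst p = x"
      by blast
    then show ?thesis
      using x by blast
  next
    case False
    obtain x where "x \<notin> Qv.span ?T"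
      using exists_not_in_Qv_span[OF _ T, of 0 1] by auto
    then show ?thesis
      using False by (intro exI[of _ "(x, 0)"]) simp
  qed
  then show ?thesis
    using someI_ex[OF ex] jones_point_unfold[of S] unfolding jones_step_def by simp
qed

definition jones_abscissa :: "nat set \<Rightarrow> real" where
  "jones_abscissa S = fst (jones_point S)"

lemma inj_jones_abscissa: "inj jones_abscissa"
proof (rule injI)
  have False if "(T, S) \<in> continuum_wo" "T \<noteq> S" "jones_abscissa S = jones_abscissa T" for S T
  proof -
    have "jones_abscissa T \<in> Qv.span (fst ` jones_point ` underS continuum_wo S)"
      using that(1,2) unfolding jones_abscissa_def by (intro Qv.span_base) (auto simp: underS_def)
    then show False
      using jones_point_spec[of S] that(3) unfolding jones_abscissa_def by simp
  qed
  then show "S = T" if "jones_abscissa S = jones_abscissa T" for S T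
    using that continuum_wo_total[of S T] by metis
qed

lemma jones_abscissa_nonzero: "jones_abscissa S \<noteq> 0"
  using jones_point_spec[of S] Qv.span_zero unfolding jones_abscissa_def by metis

lemma Qv_independent_jones_abscissa_finite: "finite A \<Longrightarrow> Qv.independent (jones_abscissa ` A)"
proof (induction A rule: finite_psubset_induct)
  case (psubset A)
  show ?case
  proof (cases "A = {}")
    case False
    then obtain M where M: "M \<in> A" "\<forall>T\<in>A. (T, M) \<in> continuum_wo"
      using finite_has_continuum_wo_greatest[OF psubset.hyps] by blast
    have "jones_abscissa ` (A - {M}) \<subseteq> fst ` jones_point ` underS continuum_wo M"
      using M unfolding jones_abscissa_def by (auto simp: underS_def)
    then have "jones_abscissa M \<notin> Qv.span (jones_abscissa ` (A - {M}))"
      using jones_point_spec[of M] Qv.span_mono unfolding jones_abscissa_def by blast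
    moreover have "Qv.independent (jones_abscissa ` (A - {M}))"
      using psubset.IH[of "A - {M}"] M(1) by blast
    ultimately have "Qv.independent (insert (jones_abscissa M) (jones_abscissa ` (A - {M})))"
      by (rule Qv.independent_insertI)
    moreover have "insert (jones_abscissa M) (jones_abscissa ` (A - {M})) = jones_abscissa ` A"
      using M(1) by blast
    ultimately show ?thesis
      by simp
  qed (simp add: Qv.independent_empty)
qed

lemma Qv_independent_jones_abscissa: "Qv.independent (range jones_abscissa)"
proof
  assume "Qv.dependent (range jones_abscissa)"
  then obtain t u where t: "finite t" "t \<subseteq> range jones_abscissa"
    and u: "(\<Sum>v\<in>t. scaleQ (u v) v) = 0" "\<exists>v\<in>t. u v \<noteq> 0"
    unfolding Qv.dependent_explicit by blast
  obtain A where A: "finite A" "t = jones_abscissa ` A"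
    using finite_subset_image[OF t] by blast
  then have "Qv.dependent (jones_abscissa ` A)"
    unfolding Qv.dependent_explicit using u by blast
  then show False
    using Qv_independent_jones_abscissa_finite[OF A(1)] by simp
qed

text \<open>
  A \<open>\<rat>\<close>-linear map with prescribed values on the independent abscissae, scaled so that
  \<open>x ^ (n - 1) * jones_coeff n x\<close> passes through every point \<open>jones_point S\<close>.
\<close>

definition jones_coeff :: "nat \<Rightarrow> real \<Rightarrow> real" where
  "jones_coeff n = QQ.construct (range jones_abscissa)
     (\<lambda>v. snd (jones_point (inv jones_abscissa v)) / v ^ (n - 1))"

lemma jones_coeff_add: "jones_coeff n (x + y) = jones_coeff n x + jones_coeff n y"
proof -
  have "Vector_Spaces.linear scaleQ scaleQ (jones_coeff n)"
    unfolding jones_coeff_def by (rule QQ.linear_construct[OF Qv_independent_jones_abscissa])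
  then have "module_hom scaleQ scaleQ (jones_coeff n)"
    by (simp add: module_hom_iff_linear)
  then show ?thesis
    by (rule module_hom.add)
qed

lemma jones_coeff_abscissa:
  "jones_coeff n (jones_abscissa S) = snd (jones_point S) / jones_abscissa S ^ (n - 1)"
  unfolding jones_coeff_def
  using QQ.construct_basis[OF Qv_independent_jones_abscissa] inj_jones_abscissa by simp

definition jones_fun :: "nat \<Rightarrow> real \<Rightarrow> real" where
  "jones_fun n x = x ^ (n - 1) * jones_coeff n x"

lemma monomial_fun_jones_fun:
  assumes "n \<ge> 1"
  shows "monomial_fun n (jones_fun n)"
proof -
  define u where "u i x = (if i < n - 1 then x else jones_coeff n x)" for i x
  have "monomial_fun n (\<lambda>x. \<Prod>i<n. u i x)"
    by (rule monomial_fun_prod_additive) (simp add: u_def jones_coeff_add)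
  moreover have "(\<Prod>i<n. u i x) = jones_fun n x" for x
  proof -
    obtain m where m: "n = Suc m"
      using assms by (cases n) auto
    have "(\<Prod>i<m. u i x) = (\<Prod>i<m. x)"
      by (intro prod.cong refl) (simp add: u_def m)
    then show ?thesis
      by (simp add: jones_fun_def u_def m)
  qed
  ultimately show ?thesis
    by simp
qed

lemma graph_of_jones_fun_meets_closed:
  assumes "closed K" "a < b" "{a<..<b} \<subseteq> fst ` K"
  shows "graph_of (jones_fun n) \<inter> K \<noteq> {}"
proof -
  obtain S where S: "closed_set_of S = K"
    using closed_set_of_surj[OF assms(1)] by blast
  then have "jones_point S \<in> K"
    using jones_point_spec[of S] assms(2,3) unfolding spans_interval_def by blast
  moreover have "jones_point S = (jones_abscissa S, jones_fun n (jones_abscissa S))"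
    using jones_abscissa_nonzero[of S]
    by (simp add: jones_fun_def jones_coeff_abscissa) (simp add: jones_abscissa_def)
  ultimately show ?thesis
    by (auto simp: graph_of_def)
qed

lemma monomial_connected_graph_example:
  assumes n: "n \<ge> 1"
  shows "\<exists>f::real \<Rightarrow> real. monomial_fun n f \<and> \<not> continuous_on UNIV f \<and> connected (graph_of f)"
proof (intro exI conjI)
  show "monomial_fun n (jones_fun n)"
    by (rule monomial_fun_jones_fun[OF n])
  show "connected (graph_of (jones_fun n))"
    by (rule connected_graph_of_if_meets_closed) (rule graph_of_jones_fun_meets_closed)
  show "\<not> continuous_on UNIV (jones_fun n)"
  proof
    assume c: "continuous_on UNIV (jones_fun n)"
    define K where "K = (\<lambda>x. (x, jones_fun n x + 1)) ` {0..1}"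
    have "closed K"
      unfolding K_def
      by (intro compact_imp_closed compact_continuous_image continuous_intros continuous_on_subset[OF c]) auto
    moreover have "{0<..<1} \<subseteq> fst ` K"
      unfolding K_def by (force simp: image_image)
    ultimately have "graph_of (jones_fun n) \<inter> K \<noteq> {}"
      using graph_of_jones_fun_meets_closed[of K 0 1] by simp
    moreover have "graph_of (jones_fun n) \<inter> K = {}"
      unfolding K_def graph_of_def by auto
    ultimately show False
      by simp
  qed
qed

theorem theorem1:
  shows "(\<forall>(n::nat) (f::real \<Rightarrow> real). n \<ge> 1 \<longrightarrow> monomial_fun n f \<longrightarrow>
            connected (graph_of f) \<or> totally_disconnected (graph_of f))
       \<and> (\<forall>n::nat. n \<ge> 1 \<longrightarrow>
            (\<exists>f::real \<Rightarrow> real. monomial_fun n f \<and> \<not> continuous_on UNIV f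
                \<and> connected (graph_of f))
          \<and> (\<exists>g::real \<Rightarrow> real. monomial_fun n g \<and> \<not> continuous_on UNIV g
                \<and> totally_disconnected (graph_of g)))"
  using monomial_graph_connected_or_totally_disconnected monomial_connected_graph_example
    monomial_totally_disconnected_example by blast

end
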